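(* For $n\ge2$ and $1\le\ell\le n-1$, let $t_{n,\ell}$ be the number of permutations $\sigma$ of $\{1,\dots,n\}$ avoiding both $1243$ and $1324$ such that $\sigma^{-1}(n)-\sigma^{-1}(1)=1$ (i.e., $1$ is immediately to the left of $n$) and $\sigma(1)=\ell$. Then for $3\le\ell\le n-2$, \[ t_{n,\ell}=t_{n,\ell-1}+t_{n-1,\ell}. \]
   Context: A permutation avoids a pattern $p$ if no subsequence of its one-line notation is order-isomorphic to $p$. *)

theory Defs
  imports Main
begin

(* A permutation of {1..n} is represented by its one-line notation: a list xs of
   length n with distinct entries and set xs = {1..n}; xs ! (i-1) = sigma(i). *)
definition is_perm :: "nat \<Rightarrow> nat list \<Rightarrow> bool" where
  "is_perm n xs \<longleftrightarrow> length xs = n \<and> distinct xs \<and> set xs = {1..n}"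

definition contains_pattern :: "nat list \<Rightarrow> nat list \<Rightarrow> bool" where
  "contains_pattern xs p \<longleftrightarrow>
     (\<exists>f :: nat \<Rightarrow> nat. strict_mono_on {0..<length p} f \<and>
        (\<forall>i<length p. f i < length xs) \<and>
        (\<forall>i<length p. \<forall>j<length p. (xs ! f i < xs ! f j \<longleftrightarrow> p ! i < p ! j)))"

definition avoids :: "nat list \<Rightarrow> nat list \<Rightarrow> bool" where
  "avoids xs p \<longleftrightarrow> \<not> contains_pattern xs p"

definition t :: "nat \<Rightarrow> nat \<Rightarrow> nat" where
  "t n l = card {xs. is_perm n xs \<and> avoids xs [1,2,4,3] \<and> avoids xs [1,3,2,4]
               \<and> (\<exists>i. Suc i < n \<and> xs ! i = 1 \<and> xs ! Suc i = n) \<and> xs ! 0 = l}"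

end

theory Submission
  imports Defs
begin

text \<open>
  Call a permutation admissible if it avoids 1243 and 1324 and has 1 immediately before its
  largest entry, and call \<open>v\<close> an obstruction of \<open>\<rho>\<close> if it is the smallest entry of an
  occurrence of 132 or of 213: a first entry \<open>j \<le> v\<close> put in front of \<open>\<rho>\<close> creates 1243 or 1324.
  Write a permutation of length \<open>k + 1\<close> as its first entry \<open>j\<close> followed by its standardised
  tail \<open>\<rho>\<close>. For \<open>2 \<le> j \<le> k\<close> it is admissible iff \<open>\<rho>\<close> is admissible and all obstructions
  of \<open>\<rho>\<close> are below \<open>j\<close>. Hence \<open>t (k + 1) l\<close> counts the admissible \<open>\<rho>\<close> of length \<open>k\<close> whose
  largest obstruction is below \<open>l\<close>, and \<open>t n l - t n (l - 1)\<close> counts the admissible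
  permutations of length \<open>n - 1\<close> whose largest obstruction is exactly \<open>l - 1\<close>.

  The latter are in bijection with the admissible \<open>\<rho>\<close> of length \<open>n - 2\<close> whose largest
  obstruction is at most \<open>l - 1\<close>, which \<open>t (n - 1) l\<close> counts. Indeed, the largest obstruction
  of \<open>j\<close> followed by \<open>\<rho>\<close> is \<open>j\<close> if \<open>j \<le> M\<close>, the largest obstruction of \<open>\<rho>\<close> if \<open>j = M + 1\<close>,
  and \<open>j - 1\<close> otherwise, where \<open>M\<close> is the largest entry of \<open>\<rho>\<close> that is not a left-to-right
  maximum; so for each target value exactly one \<open>j\<close> works.
\<close>

section \<open>Containment of 1243 and 1324\<close>

lemma contains_pattern_iff_indices:
  "contains_pattern xs p \<longleftrightarrow>
     (\<exists>is. length is = length p \<and> sorted_wrt (<) is \<and> (\<forall>i\<in>set is. i < length xs) \<and>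
        (\<forall>i<length p. \<forall>j<length p. xs ! (is ! i) < xs ! (is ! j) \<longleftrightarrow> p ! i < p ! j))"
proof
  assume "contains_pattern xs p"
  then obtain f where "strict_mono_on {0..<length p} f" "\<forall>i<length p. f i < length xs"
    "\<forall>i<length p. \<forall>j<length p. xs ! f i < xs ! f j \<longleftrightarrow> p ! i < p ! j"
    unfolding contains_pattern_def by blast
  then show "\<exists>is. length is = length p \<and> sorted_wrt (<) is \<and> (\<forall>i\<in>set is. i < length xs) \<and>
      (\<forall>i<length p. \<forall>j<length p. xs ! (is ! i) < xs ! (is ! j) \<longleftrightarrow> p ! i < p ! j)"
    by (intro exI[of _ "map f [0..<length p]"])
      (auto simp: sorted_wrt_iff_nth_less strict_mono_on_def)
next
  assume "\<exists>is. length is = length p \<and> sorted_wrt (<) is \<and> (\<forall>i\<in>set is. i < length xs) \<and>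
      (\<forall>i<length p. \<forall>j<length p. xs ! (is ! i) < xs ! (is ! j) \<longleftrightarrow> p ! i < p ! j)"
  then obtain "is" where "length is = length p" "sorted_wrt (<) is" "\<forall>i\<in>set is. i < length xs"
    "\<forall>i<length p. \<forall>j<length p. xs ! (is ! i) < xs ! (is ! j) \<longleftrightarrow> p ! i < p ! j"
    by blast
  then show "contains_pattern xs p" unfolding contains_pattern_def
    by (intro exI[of _ "(!) is"]) (auto simp: sorted_wrt_iff_nth_less strict_mono_on_def)
qed

lemma ex_length_4: "(\<exists>xs. length xs = 4 \<and> P xs) \<longleftrightarrow> (\<exists>a b c d. P [a, b, c, d])"
proof
  assume "\<exists>xs. length xs = 4 \<and> P xs"
  then obtain xs where "length xs = 4" "P xs" by blast
  then show "\<exists>a b c d. P [a, b, c, d]" by (auto simp: numeral_eq_Suc length_Suc_conv)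
qed force

lemma contains_pattern_length_4:
  "contains_pattern xs [p0, p1, p2, p3] \<longleftrightarrow>
     (\<exists>d<length xs. \<exists>c<d. \<exists>b<c. \<exists>a<b.
        \<forall>i<4. \<forall>j<4. xs ! ([a, b, c, d] ! i) < xs ! ([a, b, c, d] ! j) \<longleftrightarrow>
          [p0, p1, p2, p3] ! i < [p0, p1, p2, p3] ! j)"
proof -
  have length_p: "length [p0, p1, p2, p3] = 4" by simp
  have indices: "sorted_wrt (<) [a, b, c, d] \<and> (\<forall>i\<in>set [a, b, c, d]. i < length xs) \<and> P \<longleftrightarrow>
      (d < length xs \<and> c < d \<and> b < c \<and> a < b) \<and> P" for a b c d :: nat and P
    by auto
  show ?thesis
    unfolding contains_pattern_iff_indices length_p ex_length_4 indices by blast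
qed

text \<open>Positions are quantified from the right, so that \<open>Ex_less_Suc2\<close> peels off a first entry.\<close>

definition has_1243 :: "nat list \<Rightarrow> bool" where
  "has_1243 w \<longleftrightarrow> (\<exists>d<length w. \<exists>c<d. \<exists>b<c. \<exists>a<b. w ! a < w ! b \<and> w ! b < w ! d \<and> w ! d < w ! c)"

definition has_1324 :: "nat list \<Rightarrow> bool" where
  "has_1324 w \<longleftrightarrow> (\<exists>d<length w. \<exists>c<d. \<exists>b<c. \<exists>a<b. w ! a < w ! c \<and> w ! c < w ! b \<and> w ! b < w ! d)"

lemma contains_1243_iff: "contains_pattern xs [1, 2, 4, 3] \<longleftrightarrow> has_1243 xs"
proof -
  have "(\<forall>i<4. \<forall>j<4. xs ! ([a, b, c, d] ! i) < xs ! ([a, b, c, d] ! j) \<longleftrightarrow>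
          [1, 2, 4, 3 :: nat] ! i < [1, 2, 4, 3] ! j) \<longleftrightarrow>
        xs ! a < xs ! b \<and> xs ! b < xs ! d \<and> xs ! d < xs ! c"
    for a b c d
    by (auto simp: All_less_Suc2 numeral_eq_Suc)
  then show ?thesis unfolding contains_pattern_length_4 has_1243_def by simp
qed

lemma contains_1324_iff: "contains_pattern xs [1, 3, 2, 4] \<longleftrightarrow> has_1324 xs"
proof -
  have "(\<forall>i<4. \<forall>j<4. xs ! ([a, b, c, d] ! i) < xs ! ([a, b, c, d] ! j) \<longleftrightarrow>
          [1, 3, 2, 4 :: nat] ! i < [1, 3, 2, 4] ! j) \<longleftrightarrow>
        xs ! a < xs ! c \<and> xs ! c < xs ! b \<and> xs ! b < xs ! d"
    for a b c d
    by (auto simp: All_less_Suc2 numeral_eq_Suc)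
  then show ?thesis unfolding contains_pattern_length_4 has_1324_def by simp
qed

lemma has_1243_Cons:
  "has_1243 (x # w) \<longleftrightarrow>
     has_1243 w \<or> (\<exists>d<length w. \<exists>c<d. \<exists>b<c. x < w ! b \<and> w ! b < w ! d \<and> w ! d < w ! c)"
  unfolding has_1243_def by (auto simp: Ex_less_Suc2)

lemma has_1324_Cons:
  "has_1324 (x # w) \<longleftrightarrow>
     has_1324 w \<or> (\<exists>d<length w. \<exists>c<d. \<exists>b<c. x < w ! c \<and> w ! c < w ! b \<and> w ! b < w ! d)"
  unfolding has_1324_def by (auto simp: Ex_less_Suc2)

lemma has_1243_map: "strict_mono f \<Longrightarrow> has_1243 (map f w) \<longleftrightarrow> has_1243 w"
  unfolding has_1243_def by (simp add: strict_mono_less cong: conj_cong)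

lemma has_1324_map: "strict_mono f \<Longrightarrow> has_1324 (map f w) \<longleftrightarrow> has_1324 w"
  unfolding has_1324_def by (simp add: strict_mono_less cong: conj_cong)

section \<open>Obstructions and prepending an entry\<close>

definition obstruction :: "nat \<Rightarrow> nat list \<Rightarrow> bool" where
  "obstruction v w \<longleftrightarrow>
     (\<exists>r<length w. \<exists>q<r. \<exists>p<q. w ! p = v \<and> v < w ! r \<and> w ! r < w ! q) \<or>
     (\<exists>r<length w. \<exists>q<r. \<exists>p<q. w ! q = v \<and> v < w ! p \<and> w ! p < w ! r)"

lemma obstructionE [consumes 1, case_names bottom_132 bottom_213]:
  assumes "obstruction v w"
  obtains p q r where "p < q" "q < r" "r < length w" "w ! p = v" "v < w ! r" "w ! r < w ! q"
    | p q r where "p < q" "q < r" "r < length w" "w ! q = v" "v < w ! p" "w ! p < w ! r"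
  using assms unfolding obstruction_def by blast

lemma obstruction_132I:
  "p < q \<Longrightarrow> q < r \<Longrightarrow> r < length w \<Longrightarrow> w ! p = v \<Longrightarrow> v < w ! r \<Longrightarrow> w ! r < w ! q \<Longrightarrow>
    obstruction v w"
  unfolding obstruction_def by blast

lemma obstruction_213I:
  "p < q \<Longrightarrow> q < r \<Longrightarrow> r < length w \<Longrightarrow> w ! q = v \<Longrightarrow> v < w ! p \<Longrightarrow> w ! p < w ! r \<Longrightarrow>
    obstruction v w"
  unfolding obstruction_def by blast

lemma obstruction_Cons:
  "obstruction v (x # w) \<longleftrightarrow> obstruction v w \<or>
     (v = x \<and> (\<exists>r<length w. \<exists>q<r. x < w ! r \<and> w ! r < w ! q)) \<or>
     (v < x \<and> (\<exists>r<length w. \<exists>q<r. w ! q = v \<and> x < w ! r))"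
  unfolding obstruction_def by (auto simp: Ex_less_Suc2)

lemma obstruction_map:
  assumes "strict_mono f"
  shows "obstruction v (map f w) \<longleftrightarrow> (\<exists>u. v = f u \<and> obstruction u w)"
proof -
  note mono = strict_mono_less[OF assms]
  show ?thesis
  proof
    assume "obstruction v (map f w)"
    then show "\<exists>u. v = f u \<and> obstruction u w"
    proof (cases rule: obstructionE)
      case (bottom_132 p q r)
      then have "obstruction (w ! p) w" by (intro obstruction_132I[of p q r]) (auto simp: mono)
      with bottom_132 show ?thesis by auto
    next
      case (bottom_213 p q r)
      then have "obstruction (w ! q) w" by (intro obstruction_213I[of p q r]) (auto simp: mono)
      with bottom_213 show ?thesis by auto
    qed
  next
    assume "\<exists>u. v = f u \<and> obstruction u w"
    then obtain u where "v = f u" "obstruction u w" by blast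
    from \<open>obstruction u w\<close> show "obstruction v (map f w)"
    proof (cases rule: obstructionE)
      case (bottom_132 p q r)
      with \<open>v = f u\<close> show ?thesis by (intro obstruction_132I[of p q r]) (auto simp: mono)
    next
      case (bottom_213 p q r)
      with \<open>v = f u\<close> show ?thesis by (intro obstruction_213I[of p q r]) (auto simp: mono)
    qed
  qed
qed

definition avoids_1243_1324 :: "nat list \<Rightarrow> bool" where
  "avoids_1243_1324 w \<longleftrightarrow> \<not> has_1243 w \<and> \<not> has_1324 w"

lemma avoids_1243_1324_Cons:
  "avoids_1243_1324 (x # w) \<longleftrightarrow> avoids_1243_1324 w \<and> (\<forall>v. obstruction v w \<longrightarrow> v \<le> x)"
proof -
  have "(\<exists>v. x < v \<and> obstruction v w) \<longleftrightarrow>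
      (\<exists>d<length w. \<exists>c<d. \<exists>b<c. x < w ! b \<and> w ! b < w ! d \<and> w ! d < w ! c) \<or>
      (\<exists>d<length w. \<exists>c<d. \<exists>b<c. x < w ! c \<and> w ! c < w ! b \<and> w ! b < w ! d)"
    unfolding obstruction_def ex_disj_distrib conj_disj_distribL
    by (intro arg_cong2[where f = "(\<or>)"]) auto
  moreover have "(\<forall>v. obstruction v w \<longrightarrow> v \<le> x) \<longleftrightarrow> \<not> (\<exists>v. x < v \<and> obstruction v w)"
    by (meson not_le)
  ultimately show ?thesis
    unfolding avoids_1243_1324_def has_1243_Cons has_1324_Cons by blast
qed

lemma avoids_1243_1324_map:
  "strict_mono f \<Longrightarrow> avoids_1243_1324 (map f w) \<longleftrightarrow> avoids_1243_1324 w"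
  by (simp add: avoids_1243_1324_def has_1243_map has_1324_map)

text \<open>\<open>prepend j w\<close> is the permutation of \<open>{1..k + 1}\<close> with first entry \<open>j\<close> whose tail is
  order-isomorphic to the permutation \<open>w\<close> of \<open>{1..k}\<close>.\<close>

definition bump :: "nat \<Rightarrow> nat \<Rightarrow> nat" where
  "bump j x = (if j \<le> x then Suc x else x)"

definition prepend :: "nat \<Rightarrow> nat list \<Rightarrow> nat list" where
  "prepend j w = j # map (bump j) w"

lemma strict_mono_bump: "strict_mono (bump j)"
  by (rule strict_monoI) (simp add: bump_def)

lemma bump_le_iff [simp]: "bump j x \<le> j \<longleftrightarrow> x < j"
  by (simp add: bump_def)

lemma bump_eq_self [simp]: "x < j \<Longrightarrow> bump j x = x"
  by (simp add: bump_def)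

lemma less_bump_iff [simp]: "j < bump j x \<longleftrightarrow> j \<le> x"
  by (simp add: bump_def)

lemma bump_less_bump_iff [simp]: "bump j x < bump j y \<longleftrightarrow> x < y"
  using strict_mono_bump by (rule strict_mono_less)

lemma bump_eq_iff_below: "v < j \<Longrightarrow> bump j x = v \<longleftrightarrow> x = v"
  by (auto simp: bump_def)

lemma avoids_1243_1324_prepend:
  "avoids_1243_1324 (prepend j w) \<longleftrightarrow> avoids_1243_1324 w \<and> (\<forall>v. obstruction v w \<longrightarrow> v < j)"
  unfolding prepend_def avoids_1243_1324_Cons obstruction_map[OF strict_mono_bump]
    avoids_1243_1324_map[OF strict_mono_bump] by auto

lemma obstruction_prepend:
  assumes "\<forall>u. obstruction u w \<longrightarrow> u < j"
  shows "obstruction v (prepend j w) \<longleftrightarrow> obstruction v w \<or>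
    (v = j \<and> (\<exists>r<length w. \<exists>q<r. j \<le> w ! r \<and> w ! r < w ! q)) \<or>
    (v < j \<and> (\<exists>r<length w. \<exists>q<r. w ! q = v \<and> j \<le> w ! r))"
proof -
  have "(\<exists>u. v = bump j u \<and> obstruction u w) \<longleftrightarrow> obstruction v w"
    using assms by (metis bump_eq_self)
  then show ?thesis
    unfolding prepend_def obstruction_Cons obstruction_map[OF strict_mono_bump]
    by (simp add: bump_eq_iff_below cong: conj_cong)
qed

section \<open>The largest obstruction\<close>

definition max_non_record :: "nat list \<Rightarrow> nat" where
  "max_non_record w = Max (insert 0 {w ! q | q. q < length w \<and> (\<exists>p<q. w ! q < w ! p)})"

lemma finite_non_records: "finite {w ! q | q. q < length w \<and> (\<exists>p<q. w ! q < w ! p)}"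
  by (rule finite_subset[of _ "set w"]) auto

lemma non_record_le_max_non_record:
  "p < q \<Longrightarrow> q < length w \<Longrightarrow> w ! q < w ! p \<Longrightarrow> w ! q \<le> max_non_record w"
  unfolding max_non_record_def using finite_non_records by (intro Max_ge) auto

lemma max_non_record_witness:
  assumes "0 < max_non_record w"
  obtains p q where "p < q" "q < length w" "w ! q < w ! p" "w ! q = max_non_record w"
proof -
  have "max_non_record w \<in> insert 0 {w ! q | q. q < length w \<and> (\<exists>p<q. w ! q < w ! p)}"
    unfolding max_non_record_def using finite_non_records by (intro Max_in) auto
  then show thesis using assms that by auto
qed

lemma le_max_non_record_iff:
  "0 < j \<Longrightarrow> j \<le> max_non_record w \<longleftrightarrow> (\<exists>r<length w. \<exists>q<r. j \<le> w ! r \<and> w ! r < w ! q)"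
  by (metis max_non_record_witness non_record_le_max_non_record order.trans order.strict_trans2)

lemma record_above_max_non_record:
  "q < length w \<Longrightarrow> max_non_record w < w ! q \<Longrightarrow> p < q \<Longrightarrow> w ! p \<le> w ! q"
  using non_record_le_max_non_record by fastforce

lemma obstruction_le_max_non_record:
  assumes "obstruction v w"
  shows "v \<le> max_non_record w"
  using assms
proof (cases rule: obstructionE)
  case (bottom_132 p q r)
  then show ?thesis using non_record_le_max_non_record[of q r w] by simp
next
  case (bottom_213 p q r)
  then show ?thesis using non_record_le_max_non_record[of p q w] by simp
qed

lemma max_non_record_less:
  assumes "is_perm k w" "0 < k"
  shows "max_non_record w < k"
proof (cases "max_non_record w = 0")
  case False
  then obtain p q where "p < q" "q < length w" "w ! q < w ! p" "w ! q = max_non_record w"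
    using max_non_record_witness by blast
  moreover have "w ! p \<le> k"
    using assms(1) \<open>p < q\<close> \<open>q < length w\<close> nth_mem[of p w] by (auto simp: is_perm_def)
  ultimately show ?thesis by simp
qed (use assms in simp)

lemma obstruction_if_before_record:
  assumes "distinct w" "0 < x" "x \<le> max_non_record w" "p < q" "q < length w" "w ! p = x"
    and "max_non_record w < w ! q"
  shows "obstruction x w"
proof -
  txt \<open>An inversion realising the largest non-record, together with \<open>x\<close> and the record \<open>w ! q\<close>,
    contains a 132 or a 213 with smallest entry \<open>x\<close>.\<close>
  obtain p0 q0 where pq0: "p0 < q0" "q0 < length w" "w ! q0 < w ! p0" "w ! q0 = max_non_record w"
    using max_non_record_witness assms(2,3) by (metis less_le_trans)
  have before_q: "w ! i < w ! q" if "i < q" for i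
  proof -
    have "w ! i \<noteq> w ! q" using assms(1,5) that by (simp add: nth_eq_iff_index_eq)
    then show ?thesis using record_above_max_non_record[OF assms(5,7) that] by simp
  qed
  show ?thesis
  proof (cases "x = max_non_record w")
    case True
    then have "q0 = p" using nth_eq_iff_index_eq[OF assms(1), of q0 p] pq0 assms(4-6) by simp
    then show ?thesis
      using True pq0 assms(4-7) before_q[of p0] by (intro obstruction_213I[of p0 p q]) auto
  next
    case False
    then have "x < max_non_record w" using assms(3) by simp
    then have "p \<noteq> q0" "p \<noteq> p0" using pq0 assms(6) by auto
    then consider "p < p0" | "p0 < p" "p < q0" | "q0 < p" using pq0(1) by linarith
    then show ?thesis
    proof cases
      case 1
      then show ?thesis
        using pq0 assms(6) \<open>x < max_non_record w\<close> by (intro obstruction_132I[of p p0 q0]) auto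
    next
      case 2
      then show ?thesis
        using pq0 assms(4-7) \<open>x < max_non_record w\<close> before_q[of p0]
        by (intro obstruction_213I[of p0 p q]) auto
    next
      case 3
      then show ?thesis
        using pq0 assms(4-7) \<open>x < max_non_record w\<close> by (intro obstruction_213I[of q0 p q]) auto
    qed
  qed
qed

lemma above_max_non_record_before_max:
  assumes "is_perm k w" "max_non_record w < x" "x < k"
  obtains p q where "p < q" "q < k" "w ! p = x" "w ! q = k"
proof -
  have "length w = k" "distinct w" "set w = {1..k}" using assms(1) by (auto simp: is_perm_def)
  moreover have "x \<in> set w" "k \<in> set w" using assms \<open>set w = {1..k}\<close> by auto
  ultimately obtain p q where pq: "p < k" "w ! p = x" "q < k" "w ! q = k"
    by (metis in_set_conv_nth)
  have "\<not> q < p"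
    using record_above_max_non_record[of p w q] pq assms(2,3) \<open>length w = k\<close> by auto
  moreover have "p \<noteq> q" using pq assms(3) by auto
  ultimately have "p < q" by linarith
  then show thesis using that pq by blast
qed

definition max_obstruction :: "nat list \<Rightarrow> nat" where
  "max_obstruction w = Max (insert 0 {v. obstruction v w})"

lemma finite_obstructions: "finite {v. obstruction v w}"
proof (rule finite_subset[of _ "set w"])
  show "{v. obstruction v w} \<subseteq> set w"
  proof
    fix v assume "v \<in> {v. obstruction v w}"
    then have "obstruction v w" by simp
    then show "v \<in> set w" by (cases rule: obstructionE) (metis less_trans nth_mem)+
  qed
qed simp

lemma max_obstruction_less_iff:
  "0 < j \<Longrightarrow> max_obstruction w < j \<longleftrightarrow> (\<forall>v. obstruction v w \<longrightarrow> v < j)"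
  unfolding max_obstruction_def using finite_obstructions by (subst Max_less_iff) auto

lemma max_obstruction_eqI:
  "obstruction v w \<Longrightarrow> (\<And>u. obstruction u w \<Longrightarrow> u \<le> v) \<Longrightarrow> max_obstruction w = v"
  unfolding max_obstruction_def using finite_obstructions
  by (intro Max_eqI) auto

lemma max_obstruction_le_max_non_record: "max_obstruction w \<le> max_non_record w"
  unfolding max_obstruction_def using finite_obstructions obstruction_le_max_non_record
  by (subst Max_le_iff) auto

lemma max_obstruction_prepend:
  assumes w: "is_perm k w" and j: "0 < j" "j \<le> k" "max_obstruction w < j"
  shows "max_obstruction (prepend j w) =
    (if j \<le> max_non_record w then j
     else if j = Suc (max_non_record w) then max_obstruction w
     else j - 1)"
proof -
  let ?M = "max_non_record w"
  have below: "\<forall>u. obstruction u w \<longrightarrow> u < j" using j max_obstruction_less_iff by blast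
  note obstruction_iff = obstruction_prepend[OF below]
  have entries_pos: "0 < w ! q" if "q < length w" for q
    using w that nth_mem[OF that] by (auto simp: is_perm_def)
  consider "j \<le> ?M" | "j = Suc ?M" | "Suc ?M < j" by linarith
  then show ?thesis
  proof cases
    case 1
    have "obstruction j (prepend j w)"
      using 1 j(1) le_max_non_record_iff obstruction_iff by blast
    moreover have "u \<le> j" if "obstruction u (prepend j w)" for u
      using that below obstruction_iff by fastforce
    ultimately show ?thesis using 1 by (simp add: max_obstruction_eqI)
  next
    case 2
    have "obstruction u (prepend j w) \<longleftrightarrow> obstruction u w" for u
    proof
      assume "obstruction u (prepend j w)"
      moreover have "\<not> (\<exists>r<length w. \<exists>q<r. j \<le> w ! r \<and> w ! r < w ! q)"
        using 2 le_max_non_record_iff[OF j(1), of w] by simp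
      ultimately consider "obstruction u w"
        | r q where "u < j" "r < length w" "q < r" "w ! q = u" "j \<le> w ! r"
        using obstruction_iff by blast
      then show "obstruction u w"
      proof cases
        case 2
        then show ?thesis
          using \<open>j = Suc ?M\<close> w entries_pos[of q]
          by (intro obstruction_if_before_record[of w u q r]) (auto simp: is_perm_def)
      qed
    qed (simp add: obstruction_iff)
    then show ?thesis using 2 by (simp add: max_obstruction_def)
  next
    case 3
    have "?M < j - 1" "j - 1 < k" using 3 j(2) by auto
    then obtain p q where "p < q" "q < k" "w ! p = j - 1" "w ! q = k"
      by (rule above_max_non_record_before_max[OF w])
    then have "obstruction (j - 1) (prepend j w)"
      using w j(2) 3 obstruction_iff by (auto simp: is_perm_def)
    moreover have "u \<le> j - 1" if "obstruction u (prepend j w)" for u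
      using that 3 below obstruction_iff le_max_non_record_iff[of j w] j(1) by fastforce
    ultimately show ?thesis using 3 by (simp add: max_obstruction_eqI)
  qed
qed

definition head_for :: "nat \<Rightarrow> nat list \<Rightarrow> nat" where
  "head_for m w =
    (if max_obstruction w = m then Suc (max_non_record w)
     else if m \<le> max_non_record w then m
     else Suc m)"

lemma max_obstruction_prepend_eq_iff:
  assumes "is_perm k w" "0 < j" "j \<le> k" "max_obstruction w < j"
  shows "max_obstruction (prepend j w) = m \<longleftrightarrow> max_obstruction w \<le> m \<and> j = head_for m w"
  using max_obstruction_prepend[OF assms] assms(4) max_obstruction_le_max_non_record[of w]
  unfolding head_for_def by auto

lemma head_for_bounds:
  assumes "is_perm k w" "2 \<le> m" "m < k" "max_obstruction w \<le> m"
  shows "2 \<le> head_for m w" "head_for m w \<le> k" "max_obstruction w < head_for m w"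
  using max_non_record_less[OF assms(1)] assms(2-4) max_obstruction_le_max_non_record[of w]
  unfolding head_for_def by auto

lemma inj_bump: "inj (bump j)"
  using strict_mono_bump by (rule strict_mono_imp_inj_on)

lemma prepend_eq_prepend_iff: "prepend i v = prepend j w \<longleftrightarrow> i = j \<and> v = w"
  unfolding prepend_def using inj_map_eq_map[OF inj_bump] by auto

lemma bump_image_atLeastAtMost:
  assumes "0 < j" "j \<le> Suc k"
  shows "bump j ` {1..k} = {1..Suc k} - {j}"
proof
  show "bump j ` {1..k} \<subseteq> {1..Suc k} - {j}" using assms by (auto simp: bump_def)
  show "{1..Suc k} - {j} \<subseteq> bump j ` {1..k}"
  proof
    fix x assume x: "x \<in> {1..Suc k} - {j}"
    show "x \<in> bump j ` {1..k}"
    proof (cases "x < j")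
      case True
      then show ?thesis using x assms by (intro image_eqI[of x _ x]) auto
    next
      case False
      then show ?thesis using x assms by (intro image_eqI[of x _ "x - 1"]) (auto simp: bump_def)
    qed
  qed
qed

lemma is_perm_prepend:
  assumes "is_perm k w" "0 < j" "j \<le> Suc k"
  shows "is_perm (Suc k) (prepend j w)"
proof -
  have "set (map (bump j) w) = bump j ` {1..k}" using assms(1) by (simp add: is_perm_def)
  also have "\<dots> = {1..Suc k} - {j}" using assms(2,3) by (rule bump_image_atLeastAtMost)
  finally have "set (map (bump j) w) = {1..Suc k} - {j}" .
  moreover have "distinct (map (bump j) w)"
    using assms(1) by (simp add: is_perm_def distinct_map inj_on_subset[OF inj_bump subset_UNIV])
  ultimately show ?thesis using assms by (auto simp: is_perm_def prepend_def)
qed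

lemma is_perm_Suc_imp_prepend:
  assumes "is_perm (Suc k) w"
  obtains v where "is_perm k v" "w = prepend (w ! 0) v"
proof -
  obtain j ws where w: "w = j # ws" using assms by (cases w) (auto simp: is_perm_def)
  have "j \<in> set w" using w by simp
  then have j: "0 < j" "j \<le> Suc k" using assms by (auto simp: is_perm_def)
  have "set ws = {1..Suc k} - {j}" using assms w by (auto simp: is_perm_def)
  then have set_ws: "set ws = bump j ` {1..k}" using bump_image_atLeastAtMost[OF j] by simp
  then obtain v where v: "ws = map (bump j) v"
    by (metis ex_map_conv imageE)
  have "bump j ` set v = bump j ` {1..k}" using set_ws v by simp
  then have "set v = {1..k}" using inj_bump by (simp add: inj_image_eq_iff)
  moreover have "distinct v" "length v = k" using assms w v by (auto simp: is_perm_def distinct_map)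
  ultimately have "is_perm k v" by (simp add: is_perm_def)
  moreover have "w = prepend (w ! 0) v" using w v by (simp add: prepend_def)
  ultimately show thesis by (rule that)
qed

definition one_before_max :: "nat \<Rightarrow> nat list \<Rightarrow> bool" where
  "one_before_max k w \<longleftrightarrow> (\<exists>i. Suc i < k \<and> w ! i = 1 \<and> w ! Suc i = k)"

definition admissible :: "nat \<Rightarrow> nat list \<Rightarrow> bool" where
  "admissible k w \<longleftrightarrow> is_perm k w \<and> avoids_1243_1324 w \<and> one_before_max k w"

lemma t_eq_card_admissible: "t n l = card {w. admissible n w \<and> w ! 0 = l}"
  unfolding t_def admissible_def avoids_def contains_1243_iff contains_1324_iff
    avoids_1243_1324_def one_before_max_def
  by (simp add: conj_assoc)

lemma finite_admissible: "finite {w. admissible k w}"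
proof (rule finite_subset)
  show "{w. admissible k w} \<subseteq> {w. set w \<subseteq> {1..k} \<and> length w = k}"
    by (auto simp: admissible_def is_perm_def)
qed (rule finite_lists_length_eq, simp)

lemma one_before_max_prepend:
  assumes "length w = k" "2 \<le> j" "j \<le> k"
  shows "one_before_max (Suc k) (prepend j w) \<longleftrightarrow> one_before_max k w"
proof
  assume "one_before_max (Suc k) (prepend j w)"
  then obtain i where i: "Suc i < Suc k" "prepend j w ! i = 1" "prepend j w ! Suc i = Suc k"
    unfolding one_before_max_def by blast
  then obtain i' where "i = Suc i'" using assms(2) by (cases i) (auto simp: prepend_def)
  then have "w ! i' = 1" "w ! Suc i' = k" "Suc i' < k"
    using i assms by (auto simp: prepend_def bump_def split: if_splits)
  then show "one_before_max k w" unfolding one_before_max_def by blast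
next
  assume "one_before_max k w"
  then obtain i where "Suc i < k" "w ! i = 1" "w ! Suc i = k"
    unfolding one_before_max_def by blast
  then show "one_before_max (Suc k) (prepend j w)"
    unfolding one_before_max_def using assms
    by (intro exI[of _ "Suc i"]) (auto simp: prepend_def bump_def)
qed

lemma admissible_prepend:
  assumes "is_perm k w" "2 \<le> j" "j \<le> k"
  shows "admissible (Suc k) (prepend j w) \<longleftrightarrow> admissible k w \<and> max_obstruction w < j"
  using assms is_perm_prepend[OF assms(1)] one_before_max_prepend[of w k j]
  by (auto simp: admissible_def avoids_1243_1324_prepend max_obstruction_less_iff is_perm_def)

lemma admissible_head_bounds:
  assumes "admissible (Suc k) w"
  shows "0 < w ! 0" "w ! 0 \<le> k"
proof -
  have w: "length w = Suc k" "distinct w" "set w = {1..Suc k}"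
    using assms by (auto simp: admissible_def is_perm_def)
  then have "w ! 0 \<in> {1..Suc k}" by (metis nth_mem zero_less_Suc)
  moreover obtain i where "Suc i < Suc k" "w ! Suc i = Suc k"
    using assms by (auto simp: admissible_def one_before_max_def)
  then have "w ! 0 \<noteq> Suc k" using w by (metis nat.distinct(1) nth_eq_iff_index_eq zero_less_Suc)
  ultimately show "0 < w ! 0" "w ! 0 \<le> k" by auto
qed

lemma t_Suc_eq_card_max_obstruction_less:
  assumes "2 \<le> l" "l \<le> k"
  shows "t (Suc k) l = card {w. admissible k w \<and> max_obstruction w < l}"
proof -
  let ?S = "{w. admissible k w \<and> max_obstruction w < l}"
  have "{w. admissible (Suc k) w \<and> w ! 0 = l} = prepend l ` ?S"
  proof (intro equalityI subsetI)
    fix w assume "w \<in> {w. admissible (Suc k) w \<and> w ! 0 = l}"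
    then have w: "admissible (Suc k) w" "w ! 0 = l" by auto
    then obtain v where "is_perm k v" "w = prepend l v"
      using is_perm_Suc_imp_prepend by (metis admissible_def)
    then show "w \<in> prepend l ` ?S" using w admissible_prepend assms by auto
  next
    fix w assume "w \<in> prepend l ` ?S"
    then show "w \<in> {w. admissible (Suc k) w \<and> w ! 0 = l}"
      using admissible_prepend assms by (auto simp: admissible_def prepend_def)
  qed
  moreover have "inj_on (prepend l) ?S" by (simp add: inj_on_def prepend_eq_prepend_iff)
  ultimately show ?thesis by (simp add: t_eq_card_admissible card_image)
qed

lemma card_admissible_max_obstruction_eq:
  assumes "2 \<le> m" "m < k"
  shows "card {w. admissible (Suc k) w \<and> max_obstruction w = m} =
    card {v. admissible k v \<and> max_obstruction v \<le> m}"
proof -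
  let ?S = "{v. admissible k v \<and> max_obstruction v \<le> m}"
  let ?f = "\<lambda>v. prepend (head_for m v) v"
  have "{w. admissible (Suc k) w \<and> max_obstruction w = m} = ?f ` ?S"
  proof (intro equalityI subsetI)
    fix w assume "w \<in> {w. admissible (Suc k) w \<and> max_obstruction w = m}"
    then have w: "admissible (Suc k) w" "max_obstruction w = m" by auto
    note head = admissible_head_bounds[OF w(1)]
    obtain v where v: "is_perm k v" "w = prepend (w ! 0) v"
      using is_perm_Suc_imp_prepend w(1) by (metis admissible_def)
    have "avoids_1243_1324 (prepend (w ! 0) v)" using w v by (simp add: admissible_def)
    then have "max_obstruction v < w ! 0"
      using head(1) by (simp add: avoids_1243_1324_prepend max_obstruction_less_iff)
    then have below: "max_obstruction v \<le> m" and head_eq: "w ! 0 = head_for m v"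
      using max_obstruction_prepend_eq_iff[OF v(1) head] w(2) v(2) by auto
    then have "admissible k v"
      using admissible_prepend[OF v(1)] head_for_bounds[OF v(1) assms] w(1) v(2) by metis
    with below head_eq v(2) show "w \<in> ?f ` ?S" by auto
  next
    fix w assume "w \<in> ?f ` ?S"
    then obtain v where v: "admissible k v" "max_obstruction v \<le> m" "w = ?f v" by blast
    then have perm: "is_perm k v" by (simp add: admissible_def)
    note bounds = head_for_bounds[OF perm assms v(2)]
    have "admissible (Suc k) w" using admissible_prepend[OF perm bounds(1,2)] v bounds(3) by simp
    moreover have "max_obstruction w = m"
      using max_obstruction_prepend_eq_iff[OF perm _ bounds(2,3)] bounds(1) v(2,3) by simp
    ultimately show "w \<in> {w. admissible (Suc k) w \<and> max_obstruction w = m}" by simp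
  qed
  moreover have "inj_on ?f ?S" by (simp add: inj_on_def prepend_eq_prepend_iff)
  ultimately show ?thesis by (simp add: card_image)
qed

lemma card_less_Suc_eq:
  assumes "finite {x. P x}"
  shows "card {x. P x \<and> f x < Suc a} = card {x. P x \<and> f x < a} + card {x. P x \<and> f x = a}"
proof -
  have "{x. P x \<and> f x < Suc a} = {x. P x \<and> f x < a} \<union> {x. P x \<and> f x = a}" by auto
  moreover have "finite {x. P x \<and> f x < a}" "finite {x. P x \<and> f x = a}"
    using assms by (auto intro: finite_subset)
  ultimately show ?thesis by (subst card_Un_disjoint[symmetric]) auto
qed

theorem lemma5p5:
  fixes n l :: nat
  assumes "n \<ge> 2" and "3 \<le> l" and "l \<le> n - 2"
  shows "t n l = t n (l - 1) + t (n - 1) l"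
proof -
  obtain k where n: "n = Suc (Suc k)" using assms(1) by (metis add_2_eq_Suc le_Suc_ex)
  obtain m where l: "l = Suc m" using assms(2) by (cases l) auto
  have m: "2 \<le> m" "m < k" using assms n l by auto
  have "t n l = card {w. admissible (Suc k) w \<and> max_obstruction w < Suc m}"
    using n l m by (simp add: t_Suc_eq_card_max_obstruction_less)
  also have "\<dots> = card {w. admissible (Suc k) w \<and> max_obstruction w < m}
      + card {w. admissible (Suc k) w \<and> max_obstruction w = m}"
    using finite_admissible by (rule card_less_Suc_eq)
  also have "\<dots> = t n m + card {v. admissible k v \<and> max_obstruction v \<le> m}"
    using n m by (simp add: t_Suc_eq_card_max_obstruction_less card_admissible_max_obstruction_eq)
  also have "\<dots> = t n (l - 1) + t (n - 1) l"
    using n l m by (simp add: t_Suc_eq_card_max_obstruction_less less_Suc_eq_le)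
  finally show ?thesis .
qed

end
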